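(* Let $\mathfrak g=\mathfrak k\oplus\mathfrak m$ be a Pauli-spanned Cartan decomposition and let $b_1,\dots,b_d\in\tilde{\mathfrak m}$ be pairwise commuting Pauli strings. Let $i\neq j$ be indices and $R=\{r_1,r_2,\dots\}$ a list of indices disjoint from $\{i,j\}$. If $\tilde{\mathfrak k}^{ij}_{r_1r_2\dots}$ is non-empty, then $|\tilde{\mathfrak k}^i_{jr_1r_2\dots}|=|\tilde{\mathfrak k}^j_{ir_1r_2\dots}|$.
   Context: Pauli strings on $n$ qubits are tensor products of $I,X,Y,Z$, not all identity; two Pauli strings either commute or anticommute. A Pauli-spanned Cartan decomposition is $\mathfrak g=\mathfrak k\oplus\mathfrak m\subseteq\mathfrak{su}(2^n)$ with $\mathfrak k=\mathrm{span}_{i\mathbb R}\tilde{\mathfrak k}$, $\mathfrak m=\mathrm{span}_{i\mathbb R}\tilde{\mathfrak m}$, where $\tilde{\mathfrak k}\sqcup\tilde{\mathfrak m}$ is the set of all Pauli strings (up to phase) $\sigma$ with $i\sigma\in\mathfrak g$, and $[\mathfrak k,\mathfrak k]\subseteq\mathfrak k$, $[\mathfrak m,\mathfrak m]\subseteq\mathfrak k$, $[\mathfrak k,\mathfrak m]\subseteq\mathfrak m$. For disjoint index lists, $\tilde{\mathfrak k}^{i_1i_2\dots}_{j_1j_2\dots}$ is the set of $k\in\tilde{\mathfrak k}$ anticommuting with every $b_{i_p}$ and commuting with every $b_{j_q}$ (no condition on other indices). *)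

theory Defs
  imports Main
begin

text \<open>Single-qubit Pauli operators, modulo global phase.\<close>
datatype pauli = PI | PX | PY | PZ

fun pmult1 :: "pauli \<Rightarrow> pauli \<Rightarrow> pauli" where
  "pmult1 PI q = q"
| "pmult1 p PI = p"
| "pmult1 PX PX = PI" | "pmult1 PY PY = PI" | "pmult1 PZ PZ = PI"
| "pmult1 PX PY = PZ" | "pmult1 PY PX = PZ"
| "pmult1 PY PZ = PX" | "pmult1 PZ PY = PX"
| "pmult1 PZ PX = PY" | "pmult1 PX PZ = PY"

definition anticomm1 :: "pauli \<Rightarrow> pauli \<Rightarrow> bool" where
  "anticomm1 p q \<longleftrightarrow> p \<noteq> PI \<and> q \<noteq> PI \<and> p \<noteq> q"

type_synonym pstring = "pauli list"

definition is_pauli_string :: "nat \<Rightarrow> pstring \<Rightarrow> bool" where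
  "is_pauli_string n s \<longleftrightarrow> length s = n \<and> (\<exists>p\<in>set s. p \<noteq> PI)"

definition pmult :: "pstring \<Rightarrow> pstring \<Rightarrow> pstring" where
  "pmult s t = map2 pmult1 s t"

text \<open>Tensor products anticommute iff an odd number of tensor factors anticommute.\<close>
definition anticommutes :: "pstring \<Rightarrow> pstring \<Rightarrow> bool" where
  "anticommutes s t \<longleftrightarrow> odd (card {q. q < length s \<and> anticomm1 (s ! q) (t ! q)})"

definition commutes :: "pstring \<Rightarrow> pstring \<Rightarrow> bool" where
  "commutes s t \<longleftrightarrow> \<not> anticommutes s t"

text \<open>The set of Pauli strings (up to phase) occurring in the commutator [i s, i t]:
  it is 0 if s, t commute, and a nonzero multiple of the product s t if they anticommute.\<close>
definition comm_support :: "pstring \<Rightarrow> pstring \<Rightarrow> pstring set" where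
  "comm_support s t = (if anticommutes s t then {pmult s t} else {})"

text \<open>Pauli-spanned Cartan decomposition g = k + m, with k = span_{iR} K, m = span_{iR} M.
  Since Pauli strings are linearly independent and the bracket is bilinear, the inclusions
  [k,k] <= k, [m,m] <= k, [k,m] <= m are equivalent to the conditions on basis elements below.\<close>
definition pauli_cartan :: "nat \<Rightarrow> pstring set \<Rightarrow> pstring set \<Rightarrow> bool" where
  "pauli_cartan n K M \<longleftrightarrow>
     (\<forall>s\<in>K \<union> M. is_pauli_string n s) \<and> K \<inter> M = {} \<and>
     (\<forall>a\<in>K. \<forall>b\<in>K. comm_support a b \<subseteq> K) \<and>
     (\<forall>a\<in>M. \<forall>b\<in>M. comm_support a b \<subseteq> K) \<and>
     (\<forall>a\<in>K. \<forall>b\<in>M. comm_support a b \<subseteq> M)"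

definition ksub :: "pstring set \<Rightarrow> (nat \<Rightarrow> pstring) \<Rightarrow> nat set \<Rightarrow> nat set \<Rightarrow> pstring set" where
  "ksub K b A C = {k\<in>K. (\<forall>p\<in>A. anticommutes k (b p)) \<and> (\<forall>q\<in>C. commutes k (b q))}"

end

theory Submission
  imports Defs
begin

text \<open>Anticommutation of Pauli strings of a fixed length is a symmetric bilinear form over
  GF(2) with respect to the phase-free product. Choose \<open>k\<^sub>0 \<in> K\<close> anticommuting with
  \<open>b\<^sub>i\<close> and \<open>b\<^sub>j\<close> and commuting with every \<open>b\<^sub>r\<close>, \<open>r \<in> R\<close>. Then
  \<open>c = k\<^sub>0 b\<^sub>i b\<^sub>j\<close> lies in \<open>K\<close> (because \<open>k\<^sub>0 b\<^sub>i\<close> lies in \<open>M\<close>), has the same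
  commutation pattern as \<open>k\<^sub>0\<close> with every \<open>b\<^sub>p\<close> since the \<open>b\<^sub>p\<close> commute, and
  commutes with \<open>k\<^sub>0\<close>. An element of \<open>K\<close> anticommuting with exactly one of
  \<open>b\<^sub>i, b\<^sub>j\<close> anticommutes with exactly one of \<open>k\<^sub>0, c\<close>, and multiplying it by that
  one is an involution exchanging the two sets being counted.\<close>

lemma anticomm1_pmult1_left: "anticomm1 (pmult1 p q) r \<longleftrightarrow> anticomm1 p r \<noteq> anticomm1 q r"
  by (cases p; cases q; cases r) (simp_all add: anticomm1_def)

lemma pmult1_cancel_right: "pmult1 (pmult1 p q) q = p"
  by (cases p; cases q) simp_all

lemma anticomm1_commute: "anticomm1 p q = anticomm1 q p"
  by (auto simp: anticomm1_def)

lemma odd_card_sym_diff: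
  assumes "finite A" "finite B"
  shows "odd (card (sym_diff A B)) \<longleftrightarrow> odd (card A) \<noteq> odd (card B)"
proof -
  have "card (sym_diff A B) = card (A - B) + card (B - A)"
    using assms by (intro card_Un_disjoint) auto
  moreover have "card A = card (A - B) + card (A \<inter> B)" "card B = card (B - A) + card (A \<inter> B)"
    using assms by (simp_all add: card_Diff_subset_Int Int_commute card_mono)
  ultimately show ?thesis by presburger
qed

lemma length_pmult [simp]: "length (pmult s t) = min (length s) (length t)"
  by (simp add: pmult_def)

lemma nth_pmult [simp]:
  "q < length s \<Longrightarrow> q < length t \<Longrightarrow> pmult s t ! q = pmult1 (s ! q) (t ! q)"
  by (simp add: pmult_def)

lemma anticommutes_pmult_left:
  assumes "length s = length u" "length t = length u"
  shows "anticommutes (pmult s t) u \<longleftrightarrow> anticommutes s u \<noteq> anticommutes t u"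
proof -
  let ?A = "{q. q < length u \<and> anticomm1 (s ! q) (u ! q)}"
  let ?B = "{q. q < length u \<and> anticomm1 (t ! q) (u ! q)}"
  have "{q. q < length (pmult s t) \<and> anticomm1 (pmult s t ! q) (u ! q)} = sym_diff ?A ?B"
    using assms by (auto simp: anticomm1_pmult1_left)
  then show ?thesis
    using odd_card_sym_diff[of ?A ?B] assms by (simp add: anticommutes_def)
qed

lemma anticommutes_commute: "length s = length t \<Longrightarrow> anticommutes s t = anticommutes t s"
  by (simp add: anticommutes_def anticomm1_commute)

lemma not_anticommutes_self: "\<not> anticommutes s s"
  by (simp add: anticommutes_def anticomm1_def)

lemma pmult_cancel_right: "length s = length t \<Longrightarrow> pmult (pmult s t) t = s"
  by (intro nth_equalityI) (auto simp: pmult1_cancel_right)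

lemma pauli_cartan_length: "pauli_cartan n K M \<Longrightarrow> s \<in> K \<union> M \<Longrightarrow> length s = n"
  by (auto simp: pauli_cartan_def is_pauli_string_def)

lemma pauli_cartan_pmult_k_k:
  "pauli_cartan n K M \<Longrightarrow> s \<in> K \<Longrightarrow> t \<in> K \<Longrightarrow> anticommutes s t \<Longrightarrow> pmult s t \<in> K"
  unfolding pauli_cartan_def comm_support_def by (metis insert_subset)

lemma pauli_cartan_pmult_m_m:
  "pauli_cartan n K M \<Longrightarrow> s \<in> M \<Longrightarrow> t \<in> M \<Longrightarrow> anticommutes s t \<Longrightarrow> pmult s t \<in> K"
  unfolding pauli_cartan_def comm_support_def by (metis insert_subset)

lemma pauli_cartan_pmult_k_m:
  "pauli_cartan n K M \<Longrightarrow> s \<in> K \<Longrightarrow> t \<in> M \<Longrightarrow> anticommutes s t \<Longrightarrow> pmult s t \<in> M"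
  unfolding pauli_cartan_def comm_support_def by (metis insert_subset)

lemma pmult_mem_ksub_swap:
  assumes pc: "pauli_cartan n K M" and bM: "b ` ({x, y} \<union> R) \<subseteq> M"
    and h: "h \<in> ksub K b {x, y} R" and k: "k \<in> ksub K b {x} ({y} \<union> R)"
    and kh: "anticommutes k h"
  shows "pmult k h \<in> ksub K b {y} ({x} \<union> R)"
proof -
  have hK: "h \<in> K" and kK: "k \<in> K"
    using h k by (simp_all add: ksub_def)
  have "anticommutes (pmult k h) (b p) \<longleftrightarrow> anticommutes k (b p) \<noteq> anticommutes h (b p)"
    if "p \<in> {x, y} \<union> R" for p
    using that bM hK kK by (intro anticommutes_pmult_left) (auto simp: pauli_cartan_length[OF pc])
  moreover have "pmult k h \<in> K"
    using pauli_cartan_pmult_k_k[OF pc kK hK kh] .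
  ultimately show ?thesis
    using h k by (auto simp: ksub_def commutes_def)
qed

definition ksub_swap :: "pstring \<Rightarrow> pstring \<Rightarrow> pstring \<Rightarrow> pstring" where
  "ksub_swap k0 c k = (if anticommutes k k0 then pmult k k0 else pmult k c)"

lemma ksub_swap_involutive:
  assumes "length k = length k0" "length c = length k0" "commutes c k0"
    and "anticommutes k k0 \<or> anticommutes k c"
  shows "ksub_swap k0 c (ksub_swap k0 c k) = k"
proof (cases "anticommutes k k0")
  case True
  then have "anticommutes (pmult k k0) k0"
    using assms(1) by (simp add: anticommutes_pmult_left not_anticommutes_self)
  then show ?thesis
    using True assms(1) by (simp add: ksub_swap_def pmult_cancel_right)
next
  case False
  then have "\<not> anticommutes (pmult k c) k0"
    using assms(1-3) by (simp add: anticommutes_pmult_left commutes_def)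
  then show ?thesis
    using False assms by (simp add: ksub_swap_def pmult_cancel_right)
qed

lemma bij_betw_ksub_swap:
  assumes pc: "pauli_cartan n K M" and bM: "b ` ({x, y} \<union> R) \<subseteq> M"
    and k0: "k0 \<in> ksub K b {x, y} R" and c: "c \<in> ksub K b {x, y} R" and "commutes c k0"
    and sep: "\<And>k. k \<in> K \<Longrightarrow> anticommutes k (b x) \<noteq> anticommutes k (b y) \<Longrightarrow>
      anticommutes k k0 \<noteq> anticommutes k c"
  shows "bij_betw (ksub_swap k0 c) (ksub K b {x} ({y} \<union> R)) (ksub K b {y} ({x} \<union> R))"
proof -
  have swap: "ksub_swap k0 c k \<in> ksub K b {v} ({u} \<union> R) \<and> ksub_swap k0 c (ksub_swap k0 c k) = k"
    if uv: "{u, v} = {x, y}" and k: "k \<in> ksub K b {u} ({v} \<union> R)" for u v k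
  proof -
    have kK: "k \<in> K"
      using k by (simp add: ksub_def)
    have sep_k: "anticommutes k k0 \<noteq> anticommutes k c"
      using sep[OF kK] uv k by (auto simp: ksub_def commutes_def doubleton_eq_iff)
    have "pmult k h \<in> ksub K b {v} ({u} \<union> R)" if "anticommutes k h" "h \<in> {k0, c}" for h
      by (rule pmult_mem_ksub_swap[OF pc _ _ k that(1)]) (unfold uv, use bM k0 c that(2) in auto)
    then have "ksub_swap k0 c k \<in> ksub K b {v} ({u} \<union> R)"
      using sep_k by (auto simp: ksub_swap_def)
    moreover have "length k = length k0" "length c = length k0"
      using kK k0 c by (auto simp: ksub_def pauli_cartan_length[OF pc])
    ultimately show ?thesis
      using ksub_swap_involutive \<open>commutes c k0\<close> sep_k by blast
  qed
  show ?thesis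
    by (rule bij_betw_byWitness[where f' = "ksub_swap k0 c"]) (use swap[of x y] swap[of y x] in auto)
qed

lemma ksub_companion:
  assumes pc: "pauli_cartan n K M" and bM: "b ` P \<subseteq> M"
    and comm: "\<forall>p\<in>P. \<forall>q\<in>P. commutes (b p) (b q)" and xyR: "{x, y} \<union> R \<subseteq> P"
    and k0: "k0 \<in> ksub K b {x, y} R"
  defines "c \<equiv> pmult (pmult k0 (b x)) (b y)"
  shows "c \<in> ksub K b {x, y} R" and "commutes c k0"
    and "\<And>k. k \<in> K \<Longrightarrow> anticommutes k (b x) \<noteq> anticommutes k (b y) \<Longrightarrow>
      anticommutes k k0 \<noteq> anticommutes k c"
proof -
  have k0K: "k0 \<in> K" and k0x: "anticommutes k0 (b x)" and k0y: "anticommutes k0 (b y)"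
    using k0 by (simp_all add: ksub_def)
  have bxM: "b x \<in> M" and byM: "b y \<in> M"
    using bM xyR by auto
  have len: "length s = n" if "s \<in> K \<union> M" for s
    using pauli_cartan_length[OF pc that] .
  have anti_c: "anticommutes c u \<longleftrightarrow>
      anticommutes k0 u \<noteq> (anticommutes (b x) u \<noteq> anticommutes (b y) u)" if "length u = n" for u
    using that k0K bxM byM by (auto simp: c_def anticommutes_pmult_left len)
  have "pmult k0 (b x) \<in> M"
    using pauli_cartan_pmult_k_m[OF pc k0K bxM k0x] .
  moreover have "anticommutes (pmult k0 (b x)) (b y)"
    using k0K bxM byM k0y comm xyR by (simp add: anticommutes_pmult_left len commutes_def)
  ultimately have cK: "c \<in> K"
    unfolding c_def using pauli_cartan_pmult_m_m[OF pc _ byM] by blast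
  moreover have "anticommutes c (b p) \<longleftrightarrow> anticommutes k0 (b p)" if "p \<in> {x, y} \<union> R" for p
  proof -
    have "p \<in> P" "b p \<in> M"
      using that xyR bM by auto
    then show ?thesis
      using anti_c[of "b p"] xyR comm by (auto simp: len commutes_def)
  qed
  ultimately show "c \<in> ksub K b {x, y} R"
    using cK k0 by (auto simp: ksub_def commutes_def)
  have "anticommutes (b x) k0" "anticommutes (b y) k0"
    using k0x k0y k0K bxM byM by (simp_all add: anticommutes_commute len)
  then show "commutes c k0"
    using anti_c k0K by (simp add: commutes_def not_anticommutes_self len)
  show "anticommutes k k0 \<noteq> anticommutes k c"
    if "k \<in> K" "anticommutes k (b x) \<noteq> anticommutes k (b y)" for k
  proof -
    have "length k = n"
      using that(1) len by blast
    then show ?thesis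
      using that(2) anti_c[of k] k0K bxM byM cK
      by (simp add: anticommutes_commute[of k] len)
  qed
qed

theorem corollaryC3:
  fixes n d i j :: nat and K M :: "pstring set" and b :: "nat \<Rightarrow> pstring" and R :: "nat set"
  assumes "pauli_cartan n K M"
    and "\<forall>p\<in>{1..d}. b p \<in> M"
    and "\<forall>p\<in>{1..d}. \<forall>q\<in>{1..d}. commutes (b p) (b q)"
    and "i \<in> {1..d}" and "j \<in> {1..d}" and "i \<noteq> j"
    and "R \<subseteq> {1..d}" and "i \<notin> R" and "j \<notin> R"
    and "ksub K b {i, j} R \<noteq> {}"
  shows "card (ksub K b {i} ({j} \<union> R)) = card (ksub K b {j} ({i} \<union> R))"
proof -
  obtain k0 where k0: "k0 \<in> ksub K b {i, j} R"
    using assms(10) by blast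
  have bM: "b ` {1..d} \<subseteq> M" and ijR: "{i, j} \<union> R \<subseteq> {1..d}"
    using assms(2,4,5,7) by auto
  define c where "c = pmult (pmult k0 (b i)) (b j)"
  note companion = ksub_companion[OF assms(1) bM assms(3) ijR k0, folded c_def]
  have "bij_betw (ksub_swap k0 c) (ksub K b {i} ({j} \<union> R)) (ksub K b {j} ({i} \<union> R))"
    by (rule bij_betw_ksub_swap[OF assms(1) _ k0 companion]) (use bM ijR in blast)
  then show ?thesis
    by (rule bij_betw_same_card)
qed

end
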